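(* Let $X=\{F=0\}\subset\mathbb{P}^n$ be a Frobenius nonclassical hypersurface over $\mathbb{F}_q$ which is irreducible over $\mathbb{F}_q$ and contains an $\mathbb{F}_q$-point at which $X$ is smooth. Then $X$ is geometrically irreducible.
   Context: $X$ is Frobenius nonclassical if $F$ divides $\sum_{i=0}^n x_i^q\frac{\partial F}{\partial x_i}$. *)

theory Defs
  imports "HOL-Library.Poly_Mapping" "HOL-Computational_Algebra.Computational_Algebra"
begin

text \<open>Multivariate polynomials in the variables x_0, x_1, ... over 'a:
  a polynomial maps each monomial (exponent vector, nat to nat, finitely supported)
  to its coefficient.\<close>
type_synonym 'a mpoly = "(nat \<Rightarrow>\<^sub>0 nat) \<Rightarrow>\<^sub>0 'a"

definition mp_var :: "nat \<Rightarrow> 'a::comm_semiring_1 mpoly" where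
  "mp_var i = Poly_Mapping.single (Poly_Mapping.single i 1) 1"

definition mp_eval :: "'a::comm_semiring_1 mpoly \<Rightarrow> (nat \<Rightarrow> 'a) \<Rightarrow> 'a" where
  "mp_eval p x = (\<Sum>m\<in>Poly_Mapping.keys p. Poly_Mapping.lookup p m * (\<Prod>i\<in>Poly_Mapping.keys m. x i ^ Poly_Mapping.lookup m i))"

definition mp_pderiv :: "nat \<Rightarrow> 'a::comm_semiring_1 mpoly \<Rightarrow> 'a mpoly" where
  "mp_pderiv i p = (\<Sum>m\<in>Poly_Mapping.keys p.
      Poly_Mapping.single (m - Poly_Mapping.single i 1) (of_nat (Poly_Mapping.lookup m i) * Poly_Mapping.lookup p m))"

definition mp_homogeneous_in :: "nat \<Rightarrow> nat \<Rightarrow> 'a::zero mpoly \<Rightarrow> bool" where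
  "mp_homogeneous_in n d p \<longleftrightarrow>
     (\<forall>m\<in>Poly_Mapping.keys p. Poly_Mapping.keys m \<subseteq> {..n} \<and> (\<Sum>i\<in>Poly_Mapping.keys m. Poly_Mapping.lookup m i) = d)"

definition frobenius_nonclassical :: "nat \<Rightarrow> nat \<Rightarrow> 'a::comm_semiring_1 mpoly \<Rightarrow> bool" where
  "frobenius_nonclassical q n F \<longleftrightarrow> F dvd (\<Sum>i\<le>n. mp_var i ^ q * mp_pderiv i F)"

definition smooth_point :: "nat \<Rightarrow> 'a::comm_semiring_1 mpoly \<Rightarrow> (nat \<Rightarrow> 'a) \<Rightarrow> bool" where
  "smooth_point n F P \<longleftrightarrow> (\<exists>i\<le>n. P i \<noteq> 0) \<and> mp_eval F P = 0 \<and>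
     (\<exists>i\<le>n. mp_eval (mp_pderiv i F) P \<noteq> 0)"

end

(* Over the algebraic closure write F = G H with G irreducible and G(P) = 0. Since P is a smooth
   point, some partial derivative d(G H)(P) = H(P) dG(P) is nonzero, so H(P) is nonzero. The q-th
   power Frobenius, applied to the coefficients, fixes F and P, hence maps G to an irreducible
   factor of F through P. Irreducible polynomials over an infinite field are prime (by induction on
   the number of variables via Gauss's lemma) and H(P) is nonzero, so this factor is an associate
   of G; normalising one coefficient of G to 1 makes it G itself. Thus G and H are invariant under
   Frobenius, i.e. defined over F_q, and the irreducibility of F over F_q forces H to be a unit. *)

theory Submission
  imports Defs
begin

locale ring_hom =
  fixes f :: "'a::comm_ring_1 \<Rightarrow> 'b::comm_ring_1"
  assumes hom_0: "f 0 = 0" and hom_1: "f 1 = 1"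
    and hom_add: "f (x + y) = f x + f y" and hom_mult: "f (x * y) = f x * f y"
begin

lemma hom_uminus: "f (- x) = - f x"
  using hom_add[of "- x" x] by (simp add: hom_0 eq_neg_iff_add_eq_0)

lemma hom_diff: "f (x - y) = f x - f y"
  using hom_add[of x "- y"] by (simp add: hom_uminus)

lemma hom_sum: "f (sum g A) = (\<Sum>a\<in>A. f (g a))"
  by (induction A rule: infinite_finite_induct) (simp_all add: hom_0 hom_add)

lemma hom_prod: "f (prod g A) = (\<Prod>a\<in>A. f (g a))"
  by (induction A rule: infinite_finite_induct) (simp_all add: hom_1 hom_mult)

lemma hom_power: "f (x ^ n) = f x ^ n"
  by (induction n) (simp_all add: hom_1 hom_mult)

lemma hom_of_nat: "f (of_nat n) = of_nat n"
  by (induction n) (simp_all add: hom_0 hom_1 hom_add)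

lemma hom_dvd: "x dvd y \<Longrightarrow> f x dvd f y"
  by (metis dvd_def hom_mult)

lemma hom_dvd_1: "x dvd 1 \<Longrightarrow> f x dvd 1"
  using hom_dvd hom_1 by metis

end

lemma ring_hom_id: "ring_hom (\<lambda>x. x)"
  by unfold_locales simp_all

lemma ring_hom_comp: "ring_hom f \<Longrightarrow> ring_hom g \<Longrightarrow> ring_hom (\<lambda>x. f (g x))"
  by (simp add: ring_hom_def)

lemma ring_hom_inj:
  fixes f :: "'a::field \<Rightarrow> 'b::field"
  assumes "ring_hom f"
  shows "inj f"
proof (rule injI)
  interpret ring_hom f by fact
  fix x y assume "f x = f y"
  hence "f ((x - y) * inverse (x - y)) = 0" by (simp add: hom_mult hom_diff)
  thus "x = y" by (cases "x = y") (simp_all add: hom_1)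
qed

locale ring_iso =
  fixes \<phi> :: "'a::idom \<Rightarrow> 'b::idom" and \<psi> :: "'b \<Rightarrow> 'a"
  assumes hom: "ring_hom \<phi>" and inv_hom: "ring_hom \<psi>"
    and inv_left: "\<psi> (\<phi> x) = x" and inv_right: "\<phi> (\<psi> y) = y"
begin

lemma dvd_iff: "\<phi> x dvd \<phi> y \<longleftrightarrow> x dvd y"
  using ring_hom.hom_dvd[OF hom] ring_hom.hom_dvd[OF inv_hom] inv_left by metis

lemma dvd_1_iff: "\<phi> x dvd 1 \<longleftrightarrow> x dvd 1"
  using dvd_iff[of x 1] by (simp add: ring_hom.hom_1[OF hom])

lemma eq_0_iff: "\<phi> x = 0 \<longleftrightarrow> x = 0"
  using inv_left ring_hom.hom_0[OF hom] ring_hom.hom_0[OF inv_hom] by metis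

lemma irreducible_iff: "irreducible (\<phi> x) \<longleftrightarrow> irreducible x"
proof
  assume irr: "irreducible (\<phi> x)"
  show "irreducible x"
  proof (rule irreducibleI)
    show "x \<noteq> 0" "\<not> x dvd 1" using irr eq_0_iff dvd_1_iff by (auto simp: irreducible_def)
    fix a b assume "x = a * b"
    hence "\<phi> x = \<phi> a * \<phi> b" by (simp add: ring_hom.hom_mult[OF hom])
    thus "a dvd 1 \<or> b dvd 1" using irr dvd_1_iff by (auto dest: irreducibleD)
  qed
next
  assume irr: "irreducible x"
  show "irreducible (\<phi> x)"
  proof (rule irreducibleI)
    show "\<phi> x \<noteq> 0" "\<not> \<phi> x dvd 1" using irr eq_0_iff dvd_1_iff by (auto simp: irreducible_def)
    fix a b assume "\<phi> x = a * b"
    hence "x = \<psi> a * \<psi> b" by (metis inv_left ring_hom.hom_mult[OF inv_hom])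
    hence "\<psi> a dvd 1 \<or> \<psi> b dvd 1" using irr by (auto dest: irreducibleD)
    thus "a dvd 1 \<or> b dvd 1" using dvd_1_iff inv_right by metis
  qed
qed

end

lemma lookup_map_zero:
  "h 0 = 0 \<Longrightarrow> Poly_Mapping.lookup (Poly_Mapping.map h f) k = h (Poly_Mapping.lookup f k)"
  by transfer (simp add: when_def)

lemma poly_mapping_sum_single:
  "f = (\<Sum>m\<in>Poly_Mapping.keys f. Poly_Mapping.single m (Poly_Mapping.lookup f m))"
  for f :: "'k \<Rightarrow>\<^sub>0 'v::comm_monoid_add"
  by (rule poly_mapping_eqI)
     (simp add: lookup_sum lookup_single when_def sum.delta' in_keys_iff)

definition mp_const :: "'a::comm_ring_1 \<Rightarrow> 'a mpoly" where
  "mp_const a = Poly_Mapping.single 0 a"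

lemma ring_hom_mp_const: "ring_hom mp_const"
  by unfold_locales (simp_all add: mp_const_def single_add mult_single)

lemma mp_const_eq_0_iff [simp]: "mp_const a = 0 \<longleftrightarrow> a = 0"
  by (metis mp_const_def lookup_single_eq single_zero)

lemma lookup_mp_const_mult:
  "Poly_Mapping.lookup (mp_const c * f) m = c * Poly_Mapping.lookup (f :: 'a::comm_ring_1 mpoly) m"
  by (simp add: mp_const_def mult_map_scale_conv_mult[symmetric] lookup_map_zero)

definition eval_monom :: "(nat \<Rightarrow>\<^sub>0 nat) \<Rightarrow> (nat \<Rightarrow> 'c::comm_ring_1) \<Rightarrow> 'c" where
  "eval_monom m v = (\<Prod>i\<in>Poly_Mapping.keys m. v i ^ Poly_Mapping.lookup m i)"

lemma eval_monom_superset: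
  "finite S \<Longrightarrow> Poly_Mapping.keys m \<subseteq> S \<Longrightarrow> eval_monom m v = (\<Prod>i\<in>S. v i ^ Poly_Mapping.lookup m i)"
  unfolding eval_monom_def by (rule prod.mono_neutral_left) (auto simp: in_keys_iff)

lemma eval_monom_0 [simp]: "eval_monom 0 v = 1"
  by (simp add: eval_monom_def)

lemma eval_monom_add: "eval_monom (m1 + m2) v = eval_monom m1 v * eval_monom m2 v"
proof -
  let ?S = "Poly_Mapping.keys m1 \<union> Poly_Mapping.keys m2"
  have "eval_monom (m1 + m2) v = (\<Prod>i\<in>?S. v i ^ Poly_Mapping.lookup m1 i * v i ^ Poly_Mapping.lookup m2 i)"
    using keys_add[of m1 m2] by (subst eval_monom_superset[of ?S]) (auto simp: lookup_add power_add)
  thus ?thesis by (simp add: prod.distrib eval_monom_superset[of ?S])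
qed

lemma (in ring_hom) hom_eval_monom: "f (eval_monom m v) = eval_monom m (\<lambda>i. f (v i))"
  by (simp add: eval_monom_def hom_prod hom_power)

lemma prod_single_1:
  "(\<Prod>i\<in>S. Poly_Mapping.single (g i) (1::'a::comm_semiring_1)) = Poly_Mapping.single (sum g S) 1"
  by (induction S rule: infinite_finite_induct) (simp_all add: mult_single)

lemma eval_monom_vars: "eval_monom m mp_var = (Poly_Mapping.single m (1::'a::comm_ring_1))"
proof -
  have pow: "mp_var i ^ k = Poly_Mapping.single (Poly_Mapping.single i k) (1::'a)" for i k
    by (induction k) (simp_all add: mp_var_def mult_single single_add[symmetric])
  show ?thesis
    unfolding eval_monom_def pow prod_single_1 using poly_mapping_sum_single[of m] by simp
qed

definition mp_subst :: "('b::comm_ring_1 \<Rightarrow> 'c::comm_ring_1) \<Rightarrow> (nat \<Rightarrow> 'c) \<Rightarrow> 'b mpoly \<Rightarrow> 'c" where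
  "mp_subst h v p = (\<Sum>m\<in>Poly_Mapping.keys p. h (Poly_Mapping.lookup p m) * eval_monom m v)"

lemma mp_eval_eq_mp_subst: "mp_eval p x = mp_subst (\<lambda>a. a) x p"
  by (simp add: mp_eval_def mp_subst_def eval_monom_def)

context ring_hom
begin

lemma mp_subst_superset:
  "finite S \<Longrightarrow> Poly_Mapping.keys p \<subseteq> S \<Longrightarrow>
   mp_subst f v p = (\<Sum>m\<in>S. f (Poly_Mapping.lookup p m) * eval_monom m v)"
  unfolding mp_subst_def by (rule sum.mono_neutral_left) (auto simp: in_keys_iff hom_0)

lemma mp_subst_add: "mp_subst f v (p + q) = mp_subst f v p + mp_subst f v q"
proof -
  let ?S = "Poly_Mapping.keys p \<union> Poly_Mapping.keys q"
  have "mp_subst f v (p + q) = (\<Sum>m\<in>?S. f (Poly_Mapping.lookup p m) * eval_monom m v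
                                        + f (Poly_Mapping.lookup q m) * eval_monom m v)"
    using keys_add[of p q] by (subst mp_subst_superset[of ?S]) (auto simp: lookup_add hom_add algebra_simps)
  thus ?thesis by (simp add: sum.distrib mp_subst_superset[of ?S])
qed

lemma mp_subst_0: "mp_subst f v 0 = 0"
  by (simp add: mp_subst_def)

lemma mp_subst_sum: "mp_subst f v (sum g A) = (\<Sum>a\<in>A. mp_subst f v (g a))"
  by (induction A rule: infinite_finite_induct) (simp_all add: mp_subst_0 mp_subst_add)

lemma mp_subst_single: "mp_subst f v (Poly_Mapping.single m a) = f a * eval_monom m v"
  by (cases "a = 0") (simp_all add: mp_subst_def hom_0)

lemma mp_subst_mult: "mp_subst f v (p * q) = mp_subst f v p * mp_subst f v q"
proof -
  let ?A = "Poly_Mapping.keys p" and ?B = "Poly_Mapping.keys q"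
  let ?sp = "\<lambda>m. Poly_Mapping.single m (Poly_Mapping.lookup p m)"
  let ?sq = "\<lambda>m. Poly_Mapping.single m (Poly_Mapping.lookup q m)"
  have "p * q = (\<Sum>m\<in>?A. ?sp m) * (\<Sum>m\<in>?B. ?sq m)"
    using poly_mapping_sum_single[of p] poly_mapping_sum_single[of q] by simp
  hence "mp_subst f v (p * q) = (\<Sum>m\<in>?A. \<Sum>m'\<in>?B. f (Poly_Mapping.lookup p m) * eval_monom m v *
                                                  (f (Poly_Mapping.lookup q m') * eval_monom m' v))"
    by (simp add: sum_product mult_single mp_subst_sum mp_subst_single hom_mult eval_monom_add mult_ac)
  thus ?thesis by (simp add: mp_subst_def sum_product)
qed

lemma ring_hom_mp_subst: "ring_hom (mp_subst f v)"
proof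
  show "mp_subst f v 1 = 1"
    using mp_subst_single[where m = 0 and a = 1] by (simp add: hom_1)
qed (simp_all add: mp_subst_0 mp_subst_add mp_subst_mult)

lemma mp_subst_const [simp]: "mp_subst f v (mp_const a) = f a"
  by (simp add: mp_const_def mp_subst_single)

lemma mp_subst_var [simp]: "mp_subst f v (mp_var i) = v i"
  by (simp add: mp_var_def mp_subst_single hom_1 eval_monom_def)

end

lemma mp_subst_const_var: "mp_subst mp_const mp_var f = f"
  unfolding mp_subst_def
  by (subst (2) poly_mapping_sum_single[of f]) (simp add: eval_monom_vars mp_const_def mult_single)

lemma ring_hom_eq_mp_subst:
  assumes "ring_hom \<phi>"
  shows "\<phi> p = mp_subst (\<lambda>a. \<phi> (mp_const a)) (\<lambda>i. \<phi> (mp_var i)) p"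
proof -
  interpret ring_hom \<phi> by fact
  show ?thesis
    by (subst (1) mp_subst_const_var[symmetric])
       (simp add: mp_subst_def hom_sum hom_mult hom_eval_monom)
qed

lemma mpoly_hom_eqI:
  assumes "ring_hom \<phi>" "ring_hom \<psi>"
    and "\<And>a. \<phi> (mp_const a) = \<psi> (mp_const a)" "\<And>i. \<phi> (mp_var i) = \<psi> (mp_var i)"
  shows "\<phi> p = \<psi> p"
  using ring_hom_eq_mp_subst[OF assms(1), of p] ring_hom_eq_mp_subst[OF assms(2), of p] assms(3,4)
  by simp

lemma ring_hom_const_poly: "ring_hom (\<lambda>a::'a::comm_ring_1. [:a:])"
  by unfold_locales simp_all

lemma ring_hom_map_poly:
  assumes "ring_hom f"
  shows "ring_hom (map_poly f)"
proof -
  interpret ring_hom f by fact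
  show ?thesis
    by unfold_locales
       (auto intro!: poly_eqI simp: coeff_map_poly coeff_mult hom_0 hom_1 hom_add hom_sum hom_mult)
qed

lemma ring_hom_poly_eval: "ring_hom (\<lambda>p. poly p x)"
  by unfold_locales (simp_all add: poly_mult)

lemma ring_hom_eq_poly_eval:
  assumes "ring_hom \<phi>"
  shows "\<phi> p = poly (map_poly (\<lambda>r. \<phi> [:r:]) p) (\<phi> [:0, 1:])"
proof (induction p)
  case (pCons a p)
  interpret ring_hom \<phi> by fact
  have "\<phi> (pCons a p) = \<phi> [:a:] + \<phi> [:0, 1:] * \<phi> p"
    by (simp add: hom_add[symmetric] hom_mult[symmetric] mult_pCons_left)
  with pCons.IH show ?case by (auto simp: map_poly_pCons hom_0)
qed (simp add: ring_hom.hom_0[OF assms])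

lemma poly_hom_eqI:
  assumes "ring_hom \<phi>" "ring_hom \<psi>" "\<And>r. \<phi> [:r:] = \<psi> [:r:]" "\<phi> [:0, 1:] = \<psi> [:0, 1:]"
  shows "\<phi> p = \<psi> p"
  using ring_hom_eq_poly_eval[OF assms(1), of p] ring_hom_eq_poly_eval[OF assms(2), of p] assms(3,4)
  by simp

section \<open>Splitting off the variable \<open>x\<^sub>0\<close>\<close>

definition mp_to_poly :: "'a::comm_ring_1 mpoly \<Rightarrow> 'a mpoly poly" where
  "mp_to_poly = mp_subst (\<lambda>a. [:mp_const a:]) (\<lambda>i. if i = 0 then [:0, 1:] else [:mp_var (i - 1):])"

definition mp_shift :: "'a::comm_ring_1 mpoly \<Rightarrow> 'a mpoly" where
  "mp_shift = mp_subst mp_const (\<lambda>i. mp_var (Suc i))"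

definition mp_of_poly :: "'a::comm_ring_1 mpoly poly \<Rightarrow> 'a mpoly" where
  "mp_of_poly p = poly (map_poly mp_shift p) (mp_var 0)"

lemma ring_hom_const_mp_const: "ring_hom (\<lambda>a. [:mp_const a:])"
  using ring_hom_comp[OF ring_hom_const_poly ring_hom_mp_const] .

lemma ring_hom_mp_to_poly: "ring_hom mp_to_poly"
  unfolding mp_to_poly_def by (rule ring_hom.ring_hom_mp_subst[OF ring_hom_const_mp_const])

lemma ring_hom_mp_shift: "ring_hom mp_shift"
  unfolding mp_shift_def by (rule ring_hom.ring_hom_mp_subst[OF ring_hom_mp_const])

lemma ring_hom_mp_of_poly: "ring_hom mp_of_poly"
  unfolding mp_of_poly_def[abs_def]
  by (rule ring_hom_comp[OF ring_hom_poly_eval ring_hom_map_poly[OF ring_hom_mp_shift]])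

lemma mp_to_poly_const [simp]: "mp_to_poly (mp_const a) = [:mp_const a:]"
  by (simp add: mp_to_poly_def ring_hom.mp_subst_const[OF ring_hom_const_mp_const])

lemma mp_to_poly_var [simp]:
  "mp_to_poly (mp_var i) = (if i = 0 then [:0, 1:] else [:mp_var (i - 1):])"
  by (simp add: mp_to_poly_def ring_hom.mp_subst_var[OF ring_hom_const_mp_const])

lemma mp_shift_const [simp]: "mp_shift (mp_const a) = mp_const a"
  by (simp add: mp_shift_def ring_hom.mp_subst_const[OF ring_hom_mp_const])

lemma mp_shift_var [simp]: "mp_shift (mp_var i) = mp_var (Suc i)"
  by (simp add: mp_shift_def ring_hom.mp_subst_var[OF ring_hom_mp_const])

lemma mp_of_poly_const [simp]: "mp_of_poly [:r:] = mp_shift r"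
  by (simp add: mp_of_poly_def map_poly_pCons ring_hom.hom_0[OF ring_hom_mp_shift])

lemma mp_of_poly_X [simp]: "mp_of_poly [:0, 1:] = mp_var 0"
  by (simp add: mp_of_poly_def map_poly_pCons ring_hom.hom_0[OF ring_hom_mp_shift]
      ring_hom.hom_1[OF ring_hom_mp_shift])

lemma mp_of_poly_mp_to_poly [simp]: "mp_of_poly (mp_to_poly f) = f"
  by (rule mpoly_hom_eqI[OF ring_hom_comp[OF ring_hom_mp_of_poly ring_hom_mp_to_poly] ring_hom_id]) auto

lemma mp_to_poly_mp_shift: "mp_to_poly (mp_shift r) = [:r:]"
  by (rule mpoly_hom_eqI[OF ring_hom_comp[OF ring_hom_mp_to_poly ring_hom_mp_shift] ring_hom_const_poly])
     auto

lemma mp_to_poly_mp_of_poly [simp]: "mp_to_poly (mp_of_poly p) = p"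
  by (rule poly_hom_eqI[OF ring_hom_comp[OF ring_hom_mp_to_poly ring_hom_mp_of_poly] ring_hom_id])
     (auto simp: mp_to_poly_mp_shift)

interpretation mp_to_poly: ring_iso mp_to_poly mp_of_poly
  by (intro ring_iso.intro ring_hom_mp_to_poly ring_hom_mp_of_poly) simp_all

definition mp_trunc :: "nat \<Rightarrow> 'a::comm_ring_1 mpoly \<Rightarrow> 'a mpoly" where
  "mp_trunc N = mp_subst mp_const (\<lambda>i. if i < N then mp_var i else 0)"

definition vars_below :: "nat \<Rightarrow> 'a::comm_ring_1 mpoly \<Rightarrow> bool" where
  "vars_below N f \<longleftrightarrow> mp_trunc N f = f"

definition poly_vars_below :: "nat \<Rightarrow> 'a::comm_ring_1 mpoly poly \<Rightarrow> bool" where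
  "poly_vars_below N p \<longleftrightarrow> (\<forall>k. vars_below N (coeff p k))"

lemma ring_hom_mp_trunc: "ring_hom (mp_trunc N)"
  unfolding mp_trunc_def by (rule ring_hom.ring_hom_mp_subst[OF ring_hom_mp_const])

lemma mp_trunc_const [simp]: "mp_trunc N (mp_const a) = mp_const a"
  by (simp add: mp_trunc_def ring_hom.mp_subst_const[OF ring_hom_mp_const])

lemma mp_trunc_var [simp]: "mp_trunc N (mp_var i) = (if i < N then mp_var i else 0)"
  by (simp add: mp_trunc_def ring_hom.mp_subst_var[OF ring_hom_mp_const])

lemma mp_trunc_mono: "N \<le> M \<Longrightarrow> mp_trunc M (mp_trunc N f) = mp_trunc N f"
  by (rule mpoly_hom_eqI[OF ring_hom_comp[OF ring_hom_mp_trunc ring_hom_mp_trunc] ring_hom_mp_trunc])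
     (auto simp: ring_hom.hom_0[OF ring_hom_mp_trunc])

lemma vars_below_mono: "vars_below N f \<Longrightarrow> N \<le> M \<Longrightarrow> vars_below M f"
  unfolding vars_below_def by (metis mp_trunc_mono)

lemma mp_trunc_id:
  assumes "\<And>m i. m \<in> Poly_Mapping.keys f \<Longrightarrow> i \<in> Poly_Mapping.keys m \<Longrightarrow> i < N"
  shows "mp_trunc N f = f"
proof -
  have "mp_trunc N f = mp_subst mp_const mp_var f"
    unfolding mp_trunc_def mp_subst_def eval_monom_def using assms
    by (intro sum.cong refl arg_cong2[where f = "(*)"] prod.cong) auto
  thus ?thesis by (simp add: mp_subst_const_var)
qed

lemma ex_vars_below: "\<exists>N. vars_below N f"
proof -
  have "finite (\<Union>m\<in>Poly_Mapping.keys f. Poly_Mapping.keys m)" by simp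
  then obtain N where "\<forall>i\<in>\<Union>m\<in>Poly_Mapping.keys f. Poly_Mapping.keys m. i < N"
    by (metis finite_nat_set_iff_bounded)
  thus ?thesis unfolding vars_below_def using mp_trunc_id by blast
qed

lemma mp_trunc_0: "mp_trunc 0 f = mp_const (Poly_Mapping.lookup f 0)"
proof -
  have monom_0: "eval_monom m (\<lambda>i. (0::'a mpoly)) = (if m = 0 then 1 else 0)" for m
  proof (cases "m = 0")
    case False
    then obtain i where i: "i \<in> Poly_Mapping.keys m" by (metis ex_in_conv keys_eq_empty)
    hence "(0::'a mpoly) ^ Poly_Mapping.lookup m i = 0" by (simp add: in_keys_iff power_0_left)
    thus ?thesis unfolding eval_monom_def using i False by (simp add: prod_zero[OF _ bexI[of _ i]])
  qed simp
  have "mp_trunc 0 f = (\<Sum>m\<in>Poly_Mapping.keys f. if m = 0 then mp_const (Poly_Mapping.lookup f m) else 0)"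
    unfolding mp_trunc_def mp_subst_def by (intro sum.cong) (auto simp: monom_0)
  thus ?thesis by (auto simp: sum.delta in_keys_iff mp_const_def)
qed

lemma vars_below_0_iff: "vars_below 0 f \<longleftrightarrow> f = mp_const (Poly_Mapping.lookup f 0)"
  by (metis vars_below_def mp_trunc_0)

lemma vars_below_mult: "vars_below N f \<Longrightarrow> vars_below N g \<Longrightarrow> vars_below N (f * g)"
  by (simp add: vars_below_def ring_hom.hom_mult[OF ring_hom_mp_trunc])

lemma vars_below_quotient:
  fixes a b q :: "'a::idom mpoly"
  assumes "vars_below N a" "vars_below N b" "b \<noteq> 0" "a = b * q"
  shows "vars_below N q"
proof -
  have "b * q = b * mp_trunc N q"
    using assms by (metis vars_below_def ring_hom.hom_mult[OF ring_hom_mp_trunc])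
  thus ?thesis using assms(3) by (simp add: vars_below_def)
qed

lemma poly_vars_below_iff: "poly_vars_below N p \<longleftrightarrow> map_poly (mp_trunc N) p = p"
  by (auto simp: poly_vars_below_def vars_below_def poly_eq_iff coeff_map_poly
      ring_hom.hom_0[OF ring_hom_mp_trunc])

lemma poly_vars_below_const [simp]: "poly_vars_below N [:c:] \<longleftrightarrow> vars_below N c"
  by (auto simp: poly_vars_below_def vars_below_def coeff_pCons ring_hom.hom_0[OF ring_hom_mp_trunc]
      split: nat.split)

lemma poly_vars_below_smult:
  "vars_below N c \<Longrightarrow> poly_vars_below N p \<Longrightarrow> poly_vars_below N (smult c p)"
  by (simp add: poly_vars_below_def vars_below_mult)

lemma poly_vars_below_smult_quotient:
  fixes c :: "'a::idom mpoly"
  assumes "poly_vars_below N p" "vars_below N c" "c \<noteq> 0" "p = smult c q"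
  shows "poly_vars_below N q"
  using assms vars_below_quotient unfolding poly_vars_below_def by (metis coeff_smult)

lemma vars_below_Suc_iff: "vars_below (Suc N) f \<longleftrightarrow> poly_vars_below N (mp_to_poly f)"
proof -
  have "map_poly (mp_trunc N) (mp_to_poly f) = mp_to_poly (mp_trunc (Suc N) f)"
    by (rule mpoly_hom_eqI[OF ring_hom_comp[OF ring_hom_map_poly[OF ring_hom_mp_trunc] ring_hom_mp_to_poly]
          ring_hom_comp[OF ring_hom_mp_to_poly ring_hom_mp_trunc]])
       (auto simp: ring_hom.hom_0[OF ring_hom_mp_trunc] ring_hom.hom_1[OF ring_hom_mp_trunc]
         ring_hom.hom_0[OF ring_hom_mp_to_poly] map_poly_pCons)
  thus ?thesis
    unfolding poly_vars_below_iff vars_below_def by (metis mp_of_poly_mp_to_poly)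
qed

text \<open>Substituting \<open>t x\<^sub>i\<close> for \<open>x\<^sub>i\<close>, \<open>i \<ge> N\<close>: the degree in \<open>t\<close> is the degree of \<open>f\<close> in \<open>x\<^sub>N, x\<^sub>N\<^sub>+\<^sub>1, \<dots>\<close>,
  and it is additive because \<open>'a mpoly poly\<close> is a domain.\<close>

definition upper_scaling :: "nat \<Rightarrow> 'a::comm_ring_1 mpoly \<Rightarrow> 'a mpoly poly" where
  "upper_scaling N = mp_subst (\<lambda>a. [:mp_const a:]) (\<lambda>i. if i < N then [:mp_var i:] else [:0, mp_var i:])"

lemma ring_hom_upper_scaling: "ring_hom (upper_scaling N)"
  unfolding upper_scaling_def by (rule ring_hom.ring_hom_mp_subst[OF ring_hom_const_mp_const])

lemma upper_scaling_const [simp]: "upper_scaling N (mp_const a) = [:mp_const a:]"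
  by (simp add: upper_scaling_def ring_hom.mp_subst_const[OF ring_hom_const_mp_const])

lemma upper_scaling_var [simp]:
  "upper_scaling N (mp_var i) = (if i < N then [:mp_var i:] else [:0, mp_var i:])"
  by (simp add: upper_scaling_def ring_hom.mp_subst_var[OF ring_hom_const_mp_const])

lemma poly_upper_scaling_1: "poly (upper_scaling N f) 1 = f"
  by (rule mpoly_hom_eqI[OF ring_hom_comp[OF ring_hom_poly_eval ring_hom_upper_scaling] ring_hom_id]) auto

lemma poly_upper_scaling_0: "poly (upper_scaling N f) 0 = mp_trunc N f"
  by (rule mpoly_hom_eqI[OF ring_hom_comp[OF ring_hom_poly_eval ring_hom_upper_scaling] ring_hom_mp_trunc]) auto

lemma upper_scaling_mp_trunc: "upper_scaling N (mp_trunc N f) = [:mp_trunc N f:]"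
  by (rule mpoly_hom_eqI[OF ring_hom_comp[OF ring_hom_upper_scaling ring_hom_mp_trunc]
        ring_hom_comp[OF ring_hom_const_poly ring_hom_mp_trunc]])
     (auto simp: ring_hom.hom_0[OF ring_hom_upper_scaling])

lemma upper_scaling_eq_0_iff [simp]: "upper_scaling N f = 0 \<longleftrightarrow> f = 0"
  using poly_upper_scaling_1[of N f] by (auto simp: ring_hom.hom_0[OF ring_hom_upper_scaling])

lemma vars_below_iff_degree: "vars_below N f \<longleftrightarrow> degree (upper_scaling N f) = 0"
proof
  assume "vars_below N f"
  thus "degree (upper_scaling N f) = 0"
    using upper_scaling_mp_trunc[of N f] by (simp add: vars_below_def)
next
  assume "degree (upper_scaling N f) = 0"
  then obtain c where "upper_scaling N f = [:c:]" by (metis degree_eq_zeroE)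
  thus "vars_below N f"
    using poly_upper_scaling_1[of N f] poly_upper_scaling_0[of N f] by (simp add: vars_below_def)
qed

lemma degree_upper_scaling_mult:
  fixes f g :: "'a::idom mpoly"
  assumes "f \<noteq> 0" "g \<noteq> 0"
  shows "degree (upper_scaling N (f * g)) = degree (upper_scaling N f) + degree (upper_scaling N g)"
  using assms by (simp add: ring_hom.hom_mult[OF ring_hom_upper_scaling] degree_mult_eq)

lemma vars_below_factor:
  fixes f g h :: "'a::idom mpoly"
  assumes "vars_below N f" "f = g * h" "f \<noteq> 0"
  shows "vars_below N g"
  using assms degree_upper_scaling_mult[of g h N] by (simp add: vars_below_iff_degree)

definition total_degree :: "'a::comm_ring_1 mpoly \<Rightarrow> nat" where
  "total_degree f = degree (upper_scaling 0 f)"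

lemma total_degree_mult:
  "f \<noteq> 0 \<Longrightarrow> g \<noteq> 0 \<Longrightarrow> total_degree (f * g) = total_degree f + total_degree (g :: 'a::idom mpoly)"
  unfolding total_degree_def by (rule degree_upper_scaling_mult)

lemma is_unit_mp_const: "c \<noteq> 0 \<Longrightarrow> mp_const (c::'a::field) dvd 1"
  by (metis ring_hom.hom_mult[OF ring_hom_mp_const] ring_hom.hom_1[OF ring_hom_mp_const] right_inverse dvdI)

lemma vars_below_0_dvd_1: "vars_below 0 f \<Longrightarrow> f \<noteq> 0 \<Longrightarrow> (f::'a::field mpoly) dvd 1"
  by (metis vars_below_0_iff is_unit_mp_const mp_const_eq_0_iff)

lemma dvd_1_iff_total_degree: "(f::'a::field mpoly) dvd 1 \<longleftrightarrow> f \<noteq> 0 \<and> total_degree f = 0"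
proof
  assume "f dvd 1"
  then obtain g where fg: "1 = f * g" by (auto elim: dvdE)
  hence "f \<noteq> 0" "g \<noteq> 0" by auto
  moreover have "total_degree (1::'a mpoly) = 0"
    by (simp add: total_degree_def ring_hom.hom_1[OF ring_hom_upper_scaling])
  ultimately show "f \<noteq> 0 \<and> total_degree f = 0"
    using total_degree_mult[of f g] by (simp add: fg[symmetric])
next
  assume "f \<noteq> 0 \<and> total_degree f = 0"
  thus "f dvd 1"
    using vars_below_0_dvd_1 vars_below_iff_degree[of 0 f] unfolding total_degree_def by blast
qed

lemma irreducible_factor_exists:
  fixes f :: "'a::field mpoly"
  assumes "f \<noteq> 0" "\<not> f dvd 1" "Q f" "\<And>a b. Q (a * b) \<Longrightarrow> Q a \<or> Q b"
  shows "\<exists>g h. f = g * h \<and> irreducible g \<and> Q g"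
  using assms(1-3)
proof (induction "total_degree f" arbitrary: f rule: less_induct)
  case less
  show ?case
  proof (cases "irreducible f")
    case True
    thus ?thesis using less.prems(3) by (intro exI[of _ f] exI[of _ 1]) simp
  next
    case False
    have "\<exists>a b. f = a * b \<and> \<not> a dvd 1 \<and> \<not> b dvd 1"
    proof (rule ccontr)
      assume "\<not> ?thesis"
      hence "irreducible f" using less.prems(1,2) by (intro irreducibleI) auto
      thus False using False by contradiction
    qed
    then obtain a b where ab: "f = a * b" "\<not> a dvd 1" "\<not> b dvd 1" by blast
    have nz: "a \<noteq> 0" "b \<noteq> 0" using less.prems(1) ab(1) by auto
    have "total_degree a \<noteq> 0" "total_degree b \<noteq> 0"
      using dvd_1_iff_total_degree[of a] dvd_1_iff_total_degree[of b] nz ab(2,3) by simp_all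
    hence deg: "total_degree a < total_degree f" "total_degree b < total_degree f"
      using total_degree_mult[OF nz] ab(1) by simp_all
    from assms(4) less.prems(3) ab(1) have "Q a \<or> Q b" by blast
    thus ?thesis
    proof
      assume "Q a"
      with deg(1) obtain g h where "a = g * h" "irreducible g" "Q g"
        using less.hyps[of a] nz(1) ab(2) by blast
      thus ?thesis using ab(1) by (intro exI[of _ g] exI[of _ "h * b"]) (simp add: mult.assoc)
    next
      assume "Q b"
      with deg(2) obtain g h where "b = g * h" "irreducible g" "Q g"
        using less.hyps[of b] nz(2) ab(3) by blast
      thus ?thesis using ab(1) by (intro exI[of _ g] exI[of _ "a * h"]) (simp add: mult_ac)
    qed
  qed
qed

lemma dvd_1_imp_vars_below: "(f::'a::field mpoly) dvd 1 \<Longrightarrow> vars_below N f"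
  using dvd_1_iff_total_degree[of f] vars_below_mono[of 0 f N]
  by (simp add: vars_below_iff_degree total_degree_def)

lemma irreducible_factor_vars_below:
  fixes c :: "'a::field mpoly"
  assumes "vars_below N c" "c \<noteq> 0" "\<not> c dvd 1"
  obtains p c' where "c = p * c'" "irreducible p" "vars_below N p" "vars_below N c'"
    "total_degree c' < total_degree c"
proof -
  obtain p c' where pc': "c = p * c'" "irreducible p"
    using irreducible_factor_exists[of c "\<lambda>_. True"] assms(2,3) by blast
  have nz: "p \<noteq> 0" "c' \<noteq> 0" using pc'(1) assms(2) by auto
  have "vars_below N p" "vars_below N c'"
    using vars_below_factor[OF assms(1)] pc'(1) assms(2) by (auto simp: mult.commute)
  moreover have "total_degree p \<noteq> 0"
    using irreducible_not_unit[OF pc'(2)] dvd_1_iff_total_degree[of p] nz(1) by auto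
  hence "total_degree c' < total_degree c" using total_degree_mult[OF nz] pc'(1) by simp
  ultimately show ?thesis using that pc' by blast
qed

section \<open>Specialising variables over an infinite field\<close>

lemma ring_hom_mp_eval: "ring_hom (\<lambda>f. mp_eval f x)"
  unfolding mp_eval_eq_mp_subst by (rule ring_hom.ring_hom_mp_subst[OF ring_hom_id])

lemma mp_eval_const [simp]: "mp_eval (mp_const a) (x :: nat \<Rightarrow> 'a::comm_ring_1) = a"
  by (simp add: mp_eval_eq_mp_subst ring_hom.mp_subst_const[OF ring_hom_id])

lemma mp_eval_var [simp]: "mp_eval (mp_var i) (x :: nat \<Rightarrow> 'a::comm_ring_1) = x i"
  by (simp add: mp_eval_eq_mp_subst ring_hom.mp_subst_var[OF ring_hom_id])

lemma mp_eval_nonzero_exists: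
  fixes f :: "'a::field mpoly"
  assumes inf: "infinite (UNIV :: 'a set)" and "f \<noteq> 0"
  shows "\<exists>x. mp_eval f x \<noteq> 0"
proof -
  obtain N where "vars_below N f" using ex_vars_below by blast
  with \<open>f \<noteq> 0\<close> show ?thesis
  proof (induction N arbitrary: f)
    case 0
    thus ?case by (metis mp_eval_const mp_const_eq_0_iff vars_below_0_iff)
  next
    case (Suc N)
    let ?p = "mp_to_poly f"
    obtain k where k: "coeff ?p k \<noteq> 0"
      using Suc.prems(1) mp_to_poly.eq_0_iff by (metis leading_coeff_0_iff)
    moreover have "vars_below N (coeff ?p k)"
      using Suc.prems(2) vars_below_Suc_iff poly_vars_below_def by blast
    ultimately obtain x where x: "mp_eval (coeff ?p k) x \<noteq> 0"
      using Suc.IH by blast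
    let ?q = "map_poly (\<lambda>r. mp_eval r x) ?p"
    have "coeff ?q k \<noteq> 0"
      using x by (simp add: coeff_map_poly ring_hom.hom_0[OF ring_hom_mp_eval])
    hence "finite {s. poly ?q s = 0}" by (intro poly_roots_finite) auto
    then obtain s where s: "poly ?q s \<noteq> 0"
      using inf by (metis (mono_tags, lifting) UNIV_eq_I mem_Collect_eq)
    have "mp_eval f (\<lambda>i. if i = 0 then s else x (i - 1)) = poly ?q s"
      by (rule mpoly_hom_eqI[OF ring_hom_mp_eval ring_hom_comp[OF ring_hom_comp[OF ring_hom_poly_eval
            ring_hom_map_poly[OF ring_hom_mp_eval]] ring_hom_mp_to_poly]])
         (auto simp: map_poly_pCons ring_hom.hom_0[OF ring_hom_mp_eval] ring_hom.hom_1[OF ring_hom_mp_eval])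
    with s show ?case by metis
  qed
qed

definition mp_specialize :: "nat \<Rightarrow> (nat \<Rightarrow> 'a) \<Rightarrow> 'a::comm_ring_1 mpoly \<Rightarrow> 'a mpoly" where
  "mp_specialize N x = mp_subst mp_const (\<lambda>i. if i < N then mp_var i else mp_const (x i))"

lemma ring_hom_mp_specialize: "ring_hom (mp_specialize N x)"
  unfolding mp_specialize_def by (rule ring_hom.ring_hom_mp_subst[OF ring_hom_mp_const])

lemma mp_specialize_const [simp]: "mp_specialize N x (mp_const a) = mp_const a"
  by (simp add: mp_specialize_def ring_hom.mp_subst_const[OF ring_hom_mp_const])

lemma mp_specialize_var [simp]:
  "mp_specialize N x (mp_var i) = (if i < N then mp_var i else mp_const (x i))"
  by (simp add: mp_specialize_def ring_hom.mp_subst_var[OF ring_hom_mp_const])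

lemma mp_specialize_vars_below: "vars_below N f \<Longrightarrow> mp_specialize N x f = f"
proof -
  have "mp_specialize N x (mp_trunc N f) = mp_trunc N f"
    by (rule mpoly_hom_eqI[OF ring_hom_comp[OF ring_hom_mp_specialize ring_hom_mp_trunc] ring_hom_mp_trunc])
       (auto simp: ring_hom.hom_0[OF ring_hom_mp_specialize])
  thus "vars_below N f \<Longrightarrow> ?thesis" by (simp add: vars_below_def)
qed

lemma vars_below_mp_specialize: "vars_below N (mp_specialize N x f)"
proof -
  have "mp_trunc N (mp_specialize N x f) = mp_specialize N x f"
    by (rule mpoly_hom_eqI[OF ring_hom_comp[OF ring_hom_mp_trunc ring_hom_mp_specialize]
          ring_hom_mp_specialize]) auto
  thus ?thesis by (simp add: vars_below_def)
qed

lemma mp_eval_mp_specialize: "mp_eval (mp_specialize N x f) x = mp_eval f x"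
  by (rule mpoly_hom_eqI[OF ring_hom_comp[OF ring_hom_mp_eval ring_hom_mp_specialize] ring_hom_mp_eval]) auto

lemma specialization_exists:
  fixes c :: "'a::field mpoly"
  assumes "infinite (UNIV :: 'a set)" "c \<noteq> 0"
  shows "\<exists>\<theta>. ring_hom \<theta> \<and> (\<forall>f. vars_below N f \<longrightarrow> \<theta> f = f) \<and> (\<forall>f. vars_below N (\<theta> f)) \<and> \<theta> c \<noteq> 0"
proof -
  obtain x where "mp_eval c x \<noteq> 0" using mp_eval_nonzero_exists[OF assms] by blast
  hence "mp_specialize N x c \<noteq> 0"
    using mp_eval_mp_specialize[of N x c] by (auto simp: ring_hom.hom_0[OF ring_hom_mp_eval])
  thus ?thesis using ring_hom_mp_specialize mp_specialize_vars_below vars_below_mp_specialize by blast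
qed

lemma map_poly_fixed:
  assumes "ring_hom \<theta>" "\<And>f. vars_below N f \<Longrightarrow> \<theta> f = f" "poly_vars_below N p"
  shows "map_poly \<theta> p = p"
  using assms by (intro poly_eqI) (simp add: coeff_map_poly ring_hom.hom_0 poly_vars_below_def)

lemma poly_vars_below_map_poly:
  assumes "ring_hom \<theta>" "\<And>f. vars_below N (\<theta> f)"
  shows "poly_vars_below N (map_poly \<theta> p)"
  using assms by (simp add: poly_vars_below_def coeff_map_poly ring_hom.hom_0)

lemma map_poly_smult_hom:
  "ring_hom \<theta> \<Longrightarrow> map_poly \<theta> (smult a p) = smult (\<theta> a) (map_poly \<theta> p)"
  by (rule map_poly_smult) (simp_all add: ring_hom.hom_0 ring_hom.hom_mult)

section \<open>Irreducible polynomials over an infinite field are prime\<close>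

lemma fract_poly_clear_denominators:
  fixes p :: "'a::idom fract poly"
  obtains c q where "c \<noteq> 0" "fract_poly q = smult (to_fract c) p"
proof -
  have "\<exists>c q. c \<noteq> 0 \<and> fract_poly q = smult (to_fract c) p"
  proof (induction p)
    case 0
    show ?case by (intro exI[of _ 1] exI[of _ 0]) simp
  next
    case (pCons u p)
    then obtain c q where cq: "c \<noteq> 0" "fract_poly q = smult (to_fract c) p" by blast
    obtain x y where u: "u = Fract x y" "y \<noteq> 0" by (cases u)
    have uy: "to_fract y * u = to_fract x" using u by (simp add: Fract_conv_to_fract)
    have "fract_poly (pCons (x * c) (smult y q)) = smult (to_fract (y * c)) (pCons u p)"
    proof (rule poly_eqI)
      fix n
      show "coeff (fract_poly (pCons (x * c) (smult y q))) n = coeff (smult (to_fract (y * c)) (pCons u p)) n"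
        using uy arg_cong[OF cq(2), of "\<lambda>r. coeff r (n - 1)"]
        by (cases n) (simp_all add: coeff_map_poly mult_ac)
    qed
    moreover have "y * c \<noteq> 0" using cq(1) u(2) by simp
    ultimately show ?case by blast
  qed
  then obtain c q where "c \<noteq> 0" "fract_poly q = smult (to_fract c) p" by blast
  thus ?thesis by (rule that)
qed

lemma fract_poly_factorisation_clear_denominators:
  fixes p :: "'a::idom poly"
  assumes "fract_poly p = u * v"
  obtains c u' v' where "c \<noteq> 0" "smult c p = u' * v'" "degree u' = degree u" "degree v' = degree v"
proof -
  obtain c1 u' where c1: "c1 \<noteq> 0" "fract_poly u' = smult (to_fract c1) u"
    by (rule fract_poly_clear_denominators)
  obtain c2 v' where c2: "c2 \<noteq> 0" "fract_poly v' = smult (to_fract c2) v"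
    by (rule fract_poly_clear_denominators)
  have "fract_poly (smult (c1 * c2) p) = fract_poly (u' * v')"
    using assms c1 c2 by (simp add: mult_smult_left mult_smult_right mult_ac)
  hence "smult (c1 * c2) p = u' * v'" by (simp only: fract_poly_eq_iff)
  moreover have "degree (fract_poly u') = degree u'" "degree (fract_poly v') = degree v'"
    by (rule degree_map_poly, simp)+
  hence "degree u' = degree u" "degree v' = degree v" using c1 c2 by simp_all
  moreover have "c1 * c2 \<noteq> 0" using c1 c2 by simp
  ultimately show ?thesis using that by blast
qed

lemma const_poly_dvd_mult_cancel_factor:
  fixes p c :: "'a::idom mpoly"
  assumes "p \<noteq> 0" "vars_below N p" "poly_vars_below N a" "[:p * c:] dvd a * b" "[:p:] dvd a"
  shows "\<exists>a'. a = smult p a' \<and> poly_vars_below N a' \<and> [:c:] dvd a' * b"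
proof -
  obtain a' where a': "a = smult p a'" using assms(5) by (auto elim: dvdE)
  obtain w where "a * b = [:p * c:] * w" using assms(4) by (rule dvdE)
  hence "smult p (a' * b) = smult p ([:c:] * w)" using a' by (simp add: mult_smult_left)
  hence "a' * b = [:c:] * w" using smult_cancel[OF assms(1)] by blast
  thus ?thesis using a' poly_vars_below_smult_quotient[OF assms(3,2,1) a'] by (blast intro: dvdI)
qed

context
  fixes N :: nat
  assumes euclid: "\<And>p a b :: 'a::field mpoly. vars_below N p \<Longrightarrow> vars_below N a \<Longrightarrow> vars_below N b \<Longrightarrow>
                 irreducible p \<Longrightarrow> p dvd a * b \<Longrightarrow> p dvd a \<or> p dvd b"
begin

text \<open>Gauss's lemma for the constant polynomials: the coefficients of lowest index not divisible by
  \<open>p\<close> in the two factors produce a coefficient of the product not divisible by \<open>p\<close>.\<close>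

lemma const_poly_prime_dvd_mult:
  fixes p :: "'a mpoly"
  assumes p: "vars_below N p" "irreducible p" and a: "poly_vars_below N a" and b: "poly_vars_below N b"
    and dvd: "[:p:] dvd a * b"
  shows "[:p:] dvd a \<or> [:p:] dvd b"
proof (rule ccontr)
  assume "\<not> ?thesis"
  hence "\<exists>i. \<not> p dvd coeff a i" "\<exists>j. \<not> p dvd coeff b j" by (simp_all add: const_poly_dvd_iff)
  define i where "i = (LEAST i. \<not> p dvd coeff a i)"
  define j where "j = (LEAST j. \<not> p dvd coeff b j)"
  have i: "\<not> p dvd coeff a i" "\<And>k. k < i \<Longrightarrow> p dvd coeff a k"
    unfolding i_def using LeastI_ex[OF \<open>\<exists>i. \<not> p dvd coeff a i\<close>] not_less_Least by blast+
  have j: "\<not> p dvd coeff b j" "\<And>k. k < j \<Longrightarrow> p dvd coeff b k"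
    unfolding j_def using LeastI_ex[OF \<open>\<exists>j. \<not> p dvd coeff b j\<close>] not_less_Least by blast+
  let ?rest = "\<Sum>k\<in>{..i+j}-{i}. coeff a k * coeff b (i + j - k)"
  have "coeff (a * b) (i + j) = coeff a i * coeff b j + ?rest"
    by (simp add: coeff_mult sum.remove[of "{..i+j}" i])
  moreover have "p dvd coeff (a * b) (i + j)" using dvd by (simp add: const_poly_dvd_iff)
  ultimately have sum_dvd: "p dvd coeff a i * coeff b j + ?rest" by simp
  have "p dvd ?rest"
  proof (rule dvd_sum)
    fix k assume k: "k \<in> {..i+j}-{i}"
    show "p dvd coeff a k * coeff b (i + j - k)"
    proof (cases "k < i")
      case True
      thus ?thesis by (intro dvd_mult2 i(2))
    next
      case False
      with k have "i + j - k < j" by auto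
      thus ?thesis by (intro dvd_mult j(2))
    qed
  qed
  with sum_dvd have "p dvd coeff a i * coeff b j" by (simp add: dvd_add_left_iff)
  moreover have "vars_below N (coeff a i)" "vars_below N (coeff b j)"
    using a b by (simp_all add: poly_vars_below_def)
  ultimately have "p dvd coeff a i \<or> p dvd coeff b j" using euclid[OF p(1) _ _ p(2)] by blast
  with i(1) j(1) show False by blast
qed

lemma const_poly_dvd_mult_split:
  fixes c :: "'a mpoly"
  shows "vars_below N c \<Longrightarrow> c \<noteq> 0 \<Longrightarrow> poly_vars_below N a \<Longrightarrow> poly_vars_below N b \<Longrightarrow> [:c:] dvd a * b \<Longrightarrow>
    \<exists>c1 c2 a' b'. c = c1 * c2 \<and> a = smult c1 a' \<and> b = smult c2 b' \<and>
      poly_vars_below N a' \<and> poly_vars_below N b'"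
proof (induction "total_degree c" arbitrary: c a b rule: less_induct)
  case less
  note c = less.prems(1,2) and ab = less.prems(3,4) and dvd = less.prems(5)
  show ?case
  proof (cases "c dvd 1")
    case True
    then obtain c' where c': "c * c' = 1" by (metis dvd_def)
    hence "vars_below N c'" by (intro dvd_1_imp_vars_below) (metis dvdI mult.commute)
    hence "poly_vars_below N (smult c' a)" using ab(1) by (rule poly_vars_below_smult)
    moreover have "a = smult c (smult c' a)" by (simp add: c')
    ultimately show ?thesis using ab(2) by (metis mult_1_right smult_1_left)
  next
    case False
    then obtain p c' where pc': "c = p * c'" "irreducible p" and p: "vars_below N p" "vars_below N c'"
        and less_deg: "total_degree c' < total_degree c"
      using irreducible_factor_vars_below[OF c] by blast
    have nz: "p \<noteq> 0" "c' \<noteq> 0" using pc'(1) c(2) by auto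
    have dvd': "[:p * c':] dvd a * b" using dvd pc'(1) by simp
    hence "[:p:] dvd a * b" by (rule dvd_trans[rotated]) (simp add: dvdI[of _ _ "[:c':]"])
    hence "[:p:] dvd a \<or> [:p:] dvd b" using const_poly_prime_dvd_mult p(1) pc'(2) ab by blast
    thus ?thesis
    proof
      assume "[:p:] dvd a"
      then obtain a1 where a1: "a = smult p a1" "poly_vars_below N a1" "[:c':] dvd a1 * b"
        using const_poly_dvd_mult_cancel_factor[OF nz(1) p(1) ab(1) dvd'] by blast
      then obtain c1 c2 a' b' where "c' = c1 * c2" "a1 = smult c1 a'" "b = smult c2 b'"
          "poly_vars_below N a'" "poly_vars_below N b'"
        using less.hyps[OF less_deg p(2) nz(2) _ ab(2)] by blast
      thus ?thesis using pc'(1) a1(1) by (metis mult.assoc smult_smult)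
    next
      assume "[:p:] dvd b"
      then obtain b1 where b1: "b = smult p b1" "poly_vars_below N b1" "[:c':] dvd b1 * a"
        using const_poly_dvd_mult_cancel_factor[OF nz(1) p(1) ab(2)] dvd' by (metis mult.commute)
      then obtain c1 c2 a' b' where "c' = c1 * c2" "a = smult c1 a'" "b1 = smult c2 b'"
          "poly_vars_below N a'" "poly_vars_below N b'"
        using less.hyps[OF less_deg p(2) nz(2) ab(1)] by (metis mult.commute)
      thus ?thesis using pc'(1) b1(1) by (metis mult.assoc mult.left_commute smult_smult)
    qed
  qed
qed

lemma smult_eq_mult_cancel:
  fixes d :: "'a mpoly"
  assumes "vars_below N d" "d \<noteq> 0" "poly_vars_below N u" "poly_vars_below N v" "smult d p = u * v"
  obtains d1 d2 u' v' where "d1 \<noteq> 0" "d2 \<noteq> 0" "u = smult d1 u'" "v = smult d2 v'" "p = u' * v'"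
proof -
  have "u * v = [:d:] * p" using assms(5) by simp
  hence "[:d:] dvd u * v" by (rule dvdI)
  then obtain d1 d2 u' v' where d: "d = d1 * d2" "u = smult d1 u'" "v = smult d2 v'"
    using const_poly_dvd_mult_split[OF assms(1-4)] by blast
  have nz: "d1 \<noteq> 0" "d2 \<noteq> 0" using d(1) assms(2) by auto
  have "smult (d1 * d2) p = smult (d1 * d2) (u' * v')"
    using assms(5) d by (simp add: mult_smult_left mult_smult_right mult.commute)
  hence "p = u' * v'" using nz smult_cancel[of "d1 * d2"] by simp
  thus ?thesis using that nz d(2,3) by blast
qed

context
  assumes inf: "infinite (UNIV :: 'a set)"
begin

text \<open>Clearing denominators yields a factorisation \<open>c p = u v\<close> over \<open>'a mpoly\<close>; a specialisation
  that keeps \<open>c\<close> and the leading coefficients nonzero moves \<open>u\<close> and \<open>v\<close> into the polynomials in the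
  first \<open>N\<close> variables, where the constant can be cancelled.\<close>

lemma irreducible_fract_poly:
  fixes p :: "'a mpoly poly"
  assumes p: "poly_vars_below N p" "irreducible p" "degree p > 0"
  shows "irreducible (fract_poly p)"
proof (rule irreducibleI)
  show nz: "fract_poly p \<noteq> 0" using p(3) by auto
  have "degree (fract_poly p) = degree p" by (rule degree_map_poly) simp
  thus "\<not> fract_poly p dvd 1" using p(3) is_unit_iff_degree[OF nz] by simp
  fix u v assume uv: "fract_poly p = u * v"
  show "u dvd 1 \<or> v dvd 1"
  proof (rule ccontr)
    assume "\<not> (u dvd 1 \<or> v dvd 1)"
    hence deg_uv: "degree u > 0" "degree v > 0" using uv nz is_unit_iff_degree by auto
    obtain c u' v' where cp: "c \<noteq> 0" "smult c p = u' * v'" and deg: "degree u' = degree u" "degree v' = degree v"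
      using fract_poly_factorisation_clear_denominators[OF uv] by blast
    hence "u' \<noteq> 0" "v' \<noteq> 0" using deg_uv by auto
    hence "c * lead_coeff u' * lead_coeff v' \<noteq> 0" using cp(1) by simp
    then obtain \<theta> where \<theta>: "ring_hom \<theta>" "\<And>f. vars_below N f \<Longrightarrow> \<theta> f = f" "\<And>f. vars_below N (\<theta> f)"
        "\<theta> (c * lead_coeff u' * lead_coeff v') \<noteq> 0"
      using specialization_exists[OF inf, of _ N] by blast
    have \<theta>_nz: "\<theta> c \<noteq> 0" "\<theta> (lead_coeff u') \<noteq> 0" "\<theta> (lead_coeff v') \<noteq> 0"
      using \<theta>(4) by (simp_all add: ring_hom.hom_mult[OF \<theta>(1)])
    have "smult (\<theta> c) p = map_poly \<theta> u' * map_poly \<theta> v'"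
      using arg_cong[OF cp(2), of "map_poly \<theta>"]
      by (simp add: map_poly_smult_hom[OF \<theta>(1)] map_poly_fixed[OF \<theta>(1,2) p(1)]
          ring_hom.hom_mult[OF ring_hom_map_poly[OF \<theta>(1)]])
    then obtain d1 d2 u2 v2 where d: "d1 \<noteq> 0" "d2 \<noteq> 0" "map_poly \<theta> u' = smult d1 u2"
        "map_poly \<theta> v' = smult d2 v2" "p = u2 * v2"
      by (rule smult_eq_mult_cancel[OF \<theta>(3) \<theta>_nz(1) poly_vars_below_map_poly[OF \<theta>(1,3)]
            poly_vars_below_map_poly[OF \<theta>(1,3)]])
    have "degree (map_poly \<theta> u') = degree u'" "degree (map_poly \<theta> v') = degree v'"
      using \<theta>_nz(2,3) by (simp_all add: map_poly_degree_eq)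
    hence "degree u2 > 0" "degree v2 > 0" using d deg deg_uv by simp_all
    hence "\<not> u2 dvd 1" "\<not> v2 dvd 1" by (auto simp: is_unit_poly_iff)
    thus False using irreducibleD[OF p(2) d(5)] by blast
  qed
qed

lemma fract_poly_dvd_imp_dvd:
  fixes p a :: "'a mpoly poly"
  assumes p: "poly_vars_below N p" "irreducible p" "degree p > 0" and a: "poly_vars_below N a"
    and dvd: "fract_poly p dvd fract_poly a"
  shows "p dvd a"
proof -
  obtain w where w: "fract_poly a = fract_poly p * w" using dvd by (rule dvdE)
  obtain c w' where c: "c \<noteq> 0" "fract_poly w' = smult (to_fract c) w"
    by (rule fract_poly_clear_denominators)
  have "fract_poly (smult c a) = fract_poly (p * w')" using w c by (simp add: mult_smult_right)
  hence ca: "smult c a = p * w'" by (simp only: fract_poly_eq_iff)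
  obtain \<theta> where \<theta>: "ring_hom \<theta>" "\<And>f. vars_below N f \<Longrightarrow> \<theta> f = f" "\<And>f. vars_below N (\<theta> f)" "\<theta> c \<noteq> 0"
    using specialization_exists[OF inf c(1), of N] by blast
  have "smult (\<theta> c) a = p * map_poly \<theta> w'"
    using arg_cong[OF ca, of "map_poly \<theta>"]
    by (simp add: map_poly_smult_hom[OF \<theta>(1)] map_poly_fixed[OF \<theta>(1,2) p(1)] map_poly_fixed[OF \<theta>(1,2) a]
        ring_hom.hom_mult[OF ring_hom_map_poly[OF \<theta>(1)]])
  then obtain d1 d2 p' w2 where d: "d1 \<noteq> 0" "p = smult d1 p'" "a = p' * w2"
    by (rule smult_eq_mult_cancel[OF \<theta>(3) \<theta>(4) p(1) poly_vars_below_map_poly[OF \<theta>(1,3)]])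
  have "degree p' > 0" using p(3) d(1,2) by simp
  hence "\<not> p' dvd 1" by (auto simp: is_unit_poly_iff)
  moreover have "p = [:d1:] * p'" using d(2) by simp
  ultimately have "[:d1:] dvd 1" using irreducibleD[OF p(2)] by blast
  then obtain e where e: "1 = d1 * e" by (auto simp: is_unit_const_poly_iff elim: dvdE)
  have "a = p * smult e w2"
    using d(2,3) by (simp add: mult_smult_left mult_smult_right mult.commute[of e] e[symmetric])
  thus ?thesis by (rule dvdI)
qed

lemma poly_dvd_mult:
  fixes p a b :: "'a mpoly poly"
  assumes "poly_vars_below N p" "poly_vars_below N a" "poly_vars_below N b" "irreducible p" "degree p > 0"
    and "p dvd a * b"
  shows "p dvd a \<or> p dvd b"
proof -
  have "prime_elem (fract_poly p)"
    using assms(1,4,5) by (intro field_poly_irreducible_imp_prime irreducible_fract_poly)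
  moreover have "fract_poly p dvd fract_poly a * fract_poly b"
    using fract_poly_dvd[OF assms(6)] by simp
  ultimately have "fract_poly p dvd fract_poly a \<or> fract_poly p dvd fract_poly b"
    by (simp add: prime_elem_dvd_mult_iff)
  thus ?thesis using fract_poly_dvd_imp_dvd assms(1-5) by blast
qed

lemma euclid_Suc:
  fixes p a b :: "'a mpoly"
  assumes "vars_below (Suc N) p" "vars_below (Suc N) a" "vars_below (Suc N) b"
    and irr: "irreducible p" and dvd: "p dvd a * b"
  shows "p dvd a \<or> p dvd b"
proof -
  have vars: "poly_vars_below N (mp_to_poly p)" "poly_vars_below N (mp_to_poly a)"
      "poly_vars_below N (mp_to_poly b)"
    using assms(1-3) vars_below_Suc_iff by blast+
  have irr': "irreducible (mp_to_poly p)" using irr mp_to_poly.irreducible_iff by blast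
  have dvd': "mp_to_poly p dvd mp_to_poly a * mp_to_poly b"
    using ring_hom.hom_dvd[OF ring_hom_mp_to_poly dvd] by (simp add: ring_hom.hom_mult[OF ring_hom_mp_to_poly])
  have "mp_to_poly p dvd mp_to_poly a \<or> mp_to_poly p dvd mp_to_poly b"
  proof (cases "degree (mp_to_poly p) = 0")
    case True
    then obtain c where c: "mp_to_poly p = [:c:]" by (metis degree_eq_zeroE)
    have "irreducible c" using irr' c irreducible_const_poly_iff by metis
    moreover have "vars_below N c" using vars(1) c by simp
    ultimately show ?thesis using const_poly_prime_dvd_mult vars(2,3) dvd' c by metis
  next
    case False
    thus ?thesis using poly_dvd_mult[OF vars irr' _ dvd'] by blast
  qed
  thus ?thesis using mp_to_poly.dvd_iff by blast
qed

end

end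

lemma euclid_vars_below:
  fixes p a b :: "'a::field mpoly"
  assumes "infinite (UNIV :: 'a set)"
  shows "vars_below N p \<Longrightarrow> vars_below N a \<Longrightarrow> vars_below N b \<Longrightarrow> irreducible p \<Longrightarrow> p dvd a * b \<Longrightarrow>
    p dvd a \<or> p dvd b"
proof (induction N arbitrary: p a b)
  case 0
  thus ?case using vars_below_0_dvd_1 by (auto simp: irreducible_def)
next
  case (Suc N)
  show ?case by (rule euclid_Suc[OF Suc.IH assms Suc.prems])
qed

theorem irreducible_imp_prime_elem_mpoly:
  fixes p :: "'a::field mpoly"
  assumes "infinite (UNIV :: 'a set)" "irreducible p"
  shows "prime_elem p"
proof (rule prime_elemI)
  show "p \<noteq> 0" "\<not> p dvd 1" using assms(2) by (auto simp: irreducible_def)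
  fix a b assume "p dvd a * b"
  obtain Np Na Nb where "vars_below Np p" "vars_below Na a" "vars_below Nb b"
    using ex_vars_below by metis
  hence "vars_below (max Np (max Na Nb)) p" "vars_below (max Np (max Na Nb)) a"
      "vars_below (max Np (max Na Nb)) b"
    by (auto intro: vars_below_mono)
  thus "p dvd a \<or> p dvd b" using euclid_vars_below[OF assms(1)] assms(2) \<open>p dvd a * b\<close> by blast
qed

lemma mp_pderiv_superset:
  assumes "finite S" "Poly_Mapping.keys p \<subseteq> S"
  shows "mp_pderiv i p = (\<Sum>m\<in>S. Poly_Mapping.single (m - Poly_Mapping.single i 1)
            (of_nat (Poly_Mapping.lookup m i) * Poly_Mapping.lookup p m))"
  unfolding mp_pderiv_def using assms by (intro sum.mono_neutral_left) (auto simp: in_keys_iff)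

lemma mp_pderiv_add: "mp_pderiv i (p + q) = mp_pderiv i p + mp_pderiv i (q :: 'a::comm_ring_1 mpoly)"
proof -
  let ?S = "Poly_Mapping.keys p \<union> Poly_Mapping.keys q"
  have "mp_pderiv i (p + q) = (\<Sum>m\<in>?S. Poly_Mapping.single (m - Poly_Mapping.single i 1)
            (of_nat (Poly_Mapping.lookup m i) * Poly_Mapping.lookup p m)
          + Poly_Mapping.single (m - Poly_Mapping.single i 1)
            (of_nat (Poly_Mapping.lookup m i) * Poly_Mapping.lookup q m))"
    using keys_add[of p q]
    by (subst mp_pderiv_superset[of ?S]) (auto simp: lookup_add single_add distrib_left)
  thus ?thesis by (simp add: sum.distrib mp_pderiv_superset[of ?S])
qed

lemma mp_pderiv_0 [simp]: "mp_pderiv i 0 = 0"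
  by (simp add: mp_pderiv_def)

lemma mp_pderiv_sum: "mp_pderiv i (sum g A) = (\<Sum>a\<in>A. mp_pderiv i (g a :: 'a::comm_ring_1 mpoly))"
  by (induction A rule: infinite_finite_induct) (simp_all add: mp_pderiv_add)

lemma mp_pderiv_single:
  "mp_pderiv i (Poly_Mapping.single m a) =
    Poly_Mapping.single (m - Poly_Mapping.single i 1) (of_nat (Poly_Mapping.lookup m i) * (a::'a::comm_ring_1))"
  by (cases "a = 0") (simp_all add: mp_pderiv_def)

lemma add_diff_single_nat:
  fixes m m' :: "nat \<Rightarrow>\<^sub>0 nat"
  assumes "Poly_Mapping.lookup m' i > 0"
  shows "m + (m' - Poly_Mapping.single i 1) = (m + m') - Poly_Mapping.single i 1"
proof -
  have "Poly_Mapping.lookup (m - m') k = Poly_Mapping.lookup m k - Poly_Mapping.lookup m' k" for m m' :: "nat \<Rightarrow>\<^sub>0 nat" and k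
    by transfer simp
  thus ?thesis using assms
    by (intro poly_mapping_eqI) (auto simp: lookup_add lookup_single when_def)
qed

lemma mp_pderiv_single_mult:
  fixes a b :: "'a::comm_ring_1"
  shows "mp_pderiv i (Poly_Mapping.single m a * Poly_Mapping.single m' b) =
    Poly_Mapping.single m a * mp_pderiv i (Poly_Mapping.single m' b) +
    mp_pderiv i (Poly_Mapping.single m a) * Poly_Mapping.single m' b"
proof -
  let ?e = "Poly_Mapping.single i (1::nat)"
  \<comment> \<open>If \<open>x\<^sub>i\<close> does not occur in a monomial, subtracting \<open>?e\<close> from it is truncated, but then the
    coefficient \<open>of_nat 0\<close> vanishes.\<close>
  have right: "Poly_Mapping.single (m + (m' - ?e)) (a * (of_nat (Poly_Mapping.lookup m' i) * b))
      = Poly_Mapping.single (m + m' - ?e) (of_nat (Poly_Mapping.lookup m' i) * (a * b))"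
    using add_diff_single_nat[of m' i m] by (cases "Poly_Mapping.lookup m' i = 0") (simp_all add: mult_ac)
  have left: "Poly_Mapping.single ((m - ?e) + m') (of_nat (Poly_Mapping.lookup m i) * a * b)
      = Poly_Mapping.single (m + m' - ?e) (of_nat (Poly_Mapping.lookup m i) * (a * b))"
    using add_diff_single_nat[of m i m'] by (cases "Poly_Mapping.lookup m i = 0") (simp_all add: add.commute mult_ac)
  have "Poly_Mapping.single m a * mp_pderiv i (Poly_Mapping.single m' b) +
          mp_pderiv i (Poly_Mapping.single m a) * Poly_Mapping.single m' b
     = Poly_Mapping.single (m + (m' - ?e)) (a * (of_nat (Poly_Mapping.lookup m' i) * b))
       + Poly_Mapping.single ((m - ?e) + m') (of_nat (Poly_Mapping.lookup m i) * a * b)"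
    by (simp only: mp_pderiv_single mult_single)
  also have "\<dots> = Poly_Mapping.single (m + m' - ?e) (of_nat (Poly_Mapping.lookup (m + m') i) * (a * b))"
    by (simp only: right left single_add[symmetric]) (simp add: lookup_add algebra_simps)
  also have "\<dots> = mp_pderiv i (Poly_Mapping.single m a * Poly_Mapping.single m' b)"
    by (simp only: mp_pderiv_single mult_single)
  finally show ?thesis by simp
qed

lemma mp_pderiv_mult: "mp_pderiv i (f * g) = f * mp_pderiv i g + mp_pderiv i f * (g :: 'a::comm_ring_1 mpoly)"
proof -
  let ?sf = "\<lambda>m. Poly_Mapping.single m (Poly_Mapping.lookup f m)"
  let ?sg = "\<lambda>m. Poly_Mapping.single m (Poly_Mapping.lookup g m)"
  let ?A = "Poly_Mapping.keys f" and ?B = "Poly_Mapping.keys g"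
  have "mp_pderiv i ((\<Sum>m\<in>?A. ?sf m) * (\<Sum>m\<in>?B. ?sg m))
      = (\<Sum>m\<in>?A. ?sf m) * mp_pderiv i (\<Sum>m\<in>?B. ?sg m) + mp_pderiv i (\<Sum>m\<in>?A. ?sf m) * (\<Sum>m\<in>?B. ?sg m)"
    by (simp add: sum_product mp_pderiv_sum mp_pderiv_single_mult sum.distrib)
  thus ?thesis using poly_mapping_sum_single[of f] poly_mapping_sum_single[of g] by simp
qed

context ring_hom
begin

lemma map_eq_mp_subst: "Poly_Mapping.map f p = mp_subst (\<lambda>a. mp_const (f a)) mp_var p"
  unfolding mp_subst_def
  by (subst (1) poly_mapping_sum_single)
     (simp add: eval_monom_vars mp_const_def mult_single hom_0 poly_mapping_eqI lookup_sum lookup_single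
       lookup_map_zero when_def sum.delta' in_keys_iff)

lemma ring_hom_map: "ring_hom (Poly_Mapping.map f :: 'a mpoly \<Rightarrow> 'b mpoly)"
  unfolding map_eq_mp_subst[abs_def]
  by (rule ring_hom.ring_hom_mp_subst[OF ring_hom_comp[OF ring_hom_mp_const ring_hom_axioms]])

lemma map_const [simp]: "Poly_Mapping.map f (mp_const a) = mp_const (f a)"
  by (simp add: mp_const_def hom_0)

lemma map_var [simp]: "Poly_Mapping.map f (mp_var i) = mp_var i"
  by (simp add: mp_var_def hom_0 hom_1)

lemma mp_eval_map: "mp_eval (Poly_Mapping.map f p) (\<lambda>i. f (x i)) = f (mp_eval p x)"
  by (rule mpoly_hom_eqI[OF ring_hom_comp[OF ring_hom_mp_eval ring_hom_map]
        ring_hom_comp[OF ring_hom_axioms ring_hom_mp_eval]]) simp_all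

lemma mp_pderiv_map: "mp_pderiv i (Poly_Mapping.map f p) = Poly_Mapping.map f (mp_pderiv i p)"
proof -
  have "Poly_Mapping.keys (Poly_Mapping.map f p) \<subseteq> Poly_Mapping.keys p"
    by (auto simp: in_keys_iff lookup_map_zero hom_0)
  hence "mp_pderiv i (Poly_Mapping.map f p) = (\<Sum>m\<in>Poly_Mapping.keys p.
      Poly_Mapping.single (m - Poly_Mapping.single i 1) (of_nat (Poly_Mapping.lookup m i) * f (Poly_Mapping.lookup p m)))"
    by (subst mp_pderiv_superset[of "Poly_Mapping.keys p"]) (auto simp: lookup_map_zero hom_0)
  also have "\<dots> = Poly_Mapping.map f (mp_pderiv i p)"
    unfolding mp_pderiv_def ring_hom.hom_sum[OF ring_hom_map]
    by (simp add: hom_0 hom_mult hom_of_nat)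
  finally show ?thesis .
qed

end

lemma map_map_zero:
  "h 0 = 0 \<Longrightarrow> g 0 = 0 \<Longrightarrow> Poly_Mapping.map g (Poly_Mapping.map h p) = Poly_Mapping.map (\<lambda>x. g (h x)) p"
  by (intro poly_mapping_eqI) (simp add: lookup_map_zero)

lemma map_ident: "Poly_Mapping.map (\<lambda>x. x) p = p"
  by (intro poly_mapping_eqI) (simp add: lookup_map_zero)

lemma inj_map_zero: "inj h \<Longrightarrow> h 0 = 0 \<Longrightarrow> inj (Poly_Mapping.map h)"
  by (metis injI injD poly_mapping_eqI lookup_map_zero)

lemma ring_hom_inv:
  assumes "ring_hom \<sigma>" "bij \<sigma>"
  shows "ring_hom (inv \<sigma>)"
proof -
  interpret ring_hom \<sigma> by fact
  have "inv \<sigma> (\<sigma> x) = x" "\<sigma> (inv \<sigma> y) = y" for x y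
    using assms(2) by (simp_all add: bij_is_inj bij_is_surj surj_f_inv_f)
  thus ?thesis by unfold_locales (metis hom_0 hom_1 hom_add hom_mult)+
qed

lemma ring_iso_map:
  fixes \<sigma> :: "'a::idom \<Rightarrow> 'a"
  assumes "ring_hom \<sigma>" "bij \<sigma>"
  shows "ring_iso (Poly_Mapping.map \<sigma> :: 'a mpoly \<Rightarrow> 'a mpoly) (Poly_Mapping.map (inv \<sigma>))"
proof (rule ring_iso.intro)
  have hom: "ring_hom (inv \<sigma>)" by (rule ring_hom_inv[OF assms])
  have zero: "\<sigma> 0 = 0" "inv \<sigma> 0 = 0" by (simp_all add: ring_hom.hom_0[OF assms(1)] ring_hom.hom_0[OF hom])
  show "ring_hom (Poly_Mapping.map \<sigma> :: 'a mpoly \<Rightarrow> 'a mpoly)" by (rule ring_hom.ring_hom_map[OF assms(1)])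
  show "ring_hom (Poly_Mapping.map (inv \<sigma>) :: 'a mpoly \<Rightarrow> 'a mpoly)" by (rule ring_hom.ring_hom_map[OF hom])
  fix p q :: "'a mpoly"
  show "Poly_Mapping.map (inv \<sigma>) (Poly_Mapping.map \<sigma> p) = p" "Poly_Mapping.map \<sigma> (Poly_Mapping.map (inv \<sigma>) q) = q"
    using assms(2) zero by (simp_all add: map_map_zero map_ident bij_is_inj bij_is_surj surj_f_inv_f)
qed

section \<open>Finite fields and the Frobenius map\<close>

text \<open>The library's \<open>finite_field_power_card_eq_same\<close> requires the class \<open>finite_field\<close>, which a type
  of sort \<open>{finite, field}\<close> is not known to belong to.\<close>

lemma finite_field_power_card:
  fixes x :: "'a::{finite,field}"
  shows "x ^ card (UNIV :: 'a set) = x"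
proof (cases "x = 0")
  case False
  let ?U = "UNIV - {0 :: 'a}"
  have "bij_betw (\<lambda>y. x * y) ?U ?U"
    by (rule bij_betwI[of _ _ _ "\<lambda>y. y / x"]) (use False in auto)
  hence "\<Prod>?U = (\<Prod>y\<in>?U. x * y)" by (rule prod.reindex_bij_betw[symmetric])
  also have "\<dots> = x ^ card ?U * \<Prod>?U" by (simp add: prod.distrib)
  finally have unit: "x ^ card ?U = 1" by simp
  have "card (UNIV :: 'a set) > 0" by (rule finite_UNIV_card_ge_0) simp
  hence "card (UNIV :: 'a set) = Suc (card ?U)" by (simp add: card_Diff_singleton)
  hence "x ^ card (UNIV :: 'a set) = x * x ^ card ?U" by (simp only: power_Suc)
  with unit show ?thesis by simp
next
  case True
  have "card (UNIV :: 'a set) > 0" by (rule finite_UNIV_card_ge_0) simp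
  with True show ?thesis by (simp add: power_0_left)
qed

lemma card_ge_2_field: "card (UNIV :: 'a::{finite,field} set) \<ge> 2"
proof -
  have "card {0, 1::'a} \<le> card (UNIV :: 'a set)" by (rule card_mono) auto
  thus ?thesis by simp
qed

text \<open>The polynomial \<open>(X + 1)\<^sup>q - X\<^sup>q - 1\<close> vanishes on the whole field but has degree less than \<open>q\<close>,
  so its coefficients, the binomial coefficients \<open>q choose j\<close> for \<open>0 < j < q\<close>, vanish.\<close>

lemma finite_field_binomial_eq_0:
  assumes "0 < j" "j < card (UNIV :: 'a::{finite,field} set)"
  shows "of_nat (card (UNIV :: 'a set) choose j) = (0::'a)"
proof -
  define q where "q = card (UNIV :: 'a set)"
  have q2: "q \<ge> 2" unfolding q_def by (rule card_ge_2_field)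
  define D :: "'a poly" where "D = [:1, 1:] ^ q - monom 1 q - 1"
  have coeff_D: "coeff D k = (if 0 < k \<and> k < q then of_nat (q choose k) else 0)" for k
  proof -
    consider "k = 0" | "0 < k \<and> k < q" | "k = q" | "k > q" by linarith
    thus ?thesis
    proof cases
      case 4
      have "coeff ([:1, 1::'a:] ^ q) k = 0"
        using 4 degree_power_le[of "[:1, 1::'a:]" q] by (intro coeff_eq_0) simp
      thus ?thesis using 4 by (simp add: D_def)
    qed (use q2 in \<open>simp_all add: D_def coeff_linear_poly_power coeff_linear_power\<close>)
  qed
  have roots: "poly D x = 0" for x
    using finite_field_power_card[of x] finite_field_power_card[of "1 + x"]
    by (simp add: D_def poly_monom q_def)
  have "D = 0"
  proof (rule ccontr)
    assume "D \<noteq> 0"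
    hence "card {x. poly D x = 0} \<le> degree D" by (rule card_poly_roots_bound)
    moreover have "{x. poly D x = 0} = UNIV" using roots by auto
    moreover have "degree D \<le> q - 1" using coeff_D by (intro degree_le) auto
    ultimately show False using q2 unfolding q_def by simp
  qed
  thus ?thesis using coeff_D[of j] assms unfolding q_def by simp
qed

context
  fixes emb :: "'a::{finite,field} \<Rightarrow> 'b::field"
  assumes emb: "ring_hom emb"
begin

lemma frobenius_add:
  "(x + y) ^ card (UNIV :: 'a set) = x ^ card (UNIV :: 'a set) + (y::'b) ^ card (UNIV :: 'a set)"
proof -
  let ?q = "card (UNIV :: 'a set)"
  have q2: "?q \<ge> 2" by (rule card_ge_2_field)
  have vanish: "of_nat (?q choose k) = (0::'b)" if "0 < k" "k < ?q" for k
    using ring_hom.hom_of_nat[OF emb, of "?q choose k"] finite_field_binomial_eq_0[where 'a = 'a, OF that]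
    by (simp add: ring_hom.hom_0[OF emb])
  have "(x + y) ^ ?q = (\<Sum>k\<le>?q. of_nat (?q choose k) * x ^ k * y ^ (?q - k))"
    by (rule binomial_ring)
  also have "\<dots> = (\<Sum>k\<in>{0, ?q}. of_nat (?q choose k) * x ^ k * y ^ (?q - k))"
    by (rule sum.mono_neutral_right) (use vanish q2 in auto)
  also have "\<dots> = x ^ ?q + y ^ ?q" using q2 by simp
  finally show ?thesis .
qed

lemma ring_hom_frobenius: "ring_hom (\<lambda>y::'b. y ^ card (UNIV :: 'a set))"
  using card_ge_2_field[where 'a = 'a]
  by unfold_locales (simp_all add: frobenius_add power_mult_distrib power_0_left)

lemma frobenius_emb: "emb a ^ card (UNIV :: 'a set) = emb a"
  by (metis ring_hom.hom_power[OF emb] finite_field_power_card)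

text \<open>The roots of \<open>X\<^sup>q - X\<close> in \<open>'b\<close> are exactly the \<open>q\<close> elements of the image of \<open>'a\<close>.\<close>

lemma frobenius_fixed_imp_range:
  assumes "y ^ card (UNIV :: 'a set) = (y::'b)"
  shows "y \<in> range emb"
proof -
  let ?q = "card (UNIV :: 'a set)"
  have q2: "?q \<ge> 2" by (rule card_ge_2_field)
  define Q :: "'b poly" where "Q = monom 1 ?q - [:0, 1:]"
  have roots: "poly Q z = 0 \<longleftrightarrow> z ^ ?q = z" for z by (simp add: Q_def poly_monom)
  have "coeff Q ?q = 1" using q2 by (simp add: Q_def coeff_pCons split: nat.split)
  hence Q: "Q \<noteq> 0" by auto
  have "degree Q \<le> ?q"
    unfolding Q_def using q2 by (intro degree_diff_le) (simp_all add: degree_monom_le)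
  hence card_roots: "card {z. poly Q z = 0} \<le> ?q" using card_poly_roots_bound[OF Q] by simp
  have fin: "finite {z. poly Q z = 0}" using Q by (rule poly_roots_finite)
  have sub: "range emb \<subseteq> {z. poly Q z = 0}" using frobenius_emb roots by auto
  have "card (range emb) = ?q" using ring_hom_inj[OF emb] by (simp add: card_image)
  hence "range emb = {z. poly Q z = 0}"
    using card_subset_eq[OF fin sub] card_roots card_mono[OF fin sub] by simp
  thus ?thesis using assms roots by auto
qed

lemma frobenius_invariant_descends:
  assumes "Poly_Mapping.map (\<lambda>y. y ^ card (UNIV :: 'a set)) p = p"
  shows "\<exists>p0. p = Poly_Mapping.map emb p0"
proof -
  have zero: "inv emb 0 = 0" "emb 0 = 0"
    using ring_hom.hom_0[OF emb] ring_hom_inj[OF emb] by (metis inv_f_f)+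
  have "Poly_Mapping.lookup p m \<in> range emb" for m
    using arg_cong[OF assms, of "\<lambda>p. Poly_Mapping.lookup p m"] card_ge_2_field[where 'a = 'a]
    by (intro frobenius_fixed_imp_range) (simp add: lookup_map_zero power_0_left)
  hence "Poly_Mapping.map emb (Poly_Mapping.map (inv emb) p) = p"
    by (intro poly_mapping_eqI) (simp add: lookup_map_zero zero f_inv_into_f)
  thus ?thesis by metis
qed

end

text \<open>A finite field is not algebraically closed: \<open>1 + \<Prod>\<^sub>a (X - a)\<close> has no root.\<close>

lemma alg_closed_infinite: "infinite (UNIV :: 'a::alg_closed_field set)"
proof
  assume fin: "finite (UNIV :: 'a set)"
  define Q :: "'a poly" where "Q = (\<Prod>a\<in>UNIV. [:- a, 1:]) + 1"
  have "degree (\<Prod>a\<in>UNIV. [:- a, 1::'a:]) = card (UNIV :: 'a set)"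
    by (subst degree_prod_sum_eq) auto
  moreover have "card (UNIV :: 'a set) > 0" using fin by (simp add: card_gt_0_iff)
  ultimately have "degree Q > 0" unfolding Q_def by (simp add: degree_add_eq_left)
  then obtain x where "poly Q x = 0" using alg_closed_imp_poly_has_root by blast
  moreover have "poly (\<Prod>a\<in>UNIV. [:- a, 1:]) x = 0"
    using fin by (simp add: poly_prod prod_zero_iff)
  ultimately show False by (simp add: Q_def)
qed

lemma bij_power_alg_closed:
  assumes "ring_hom (\<lambda>y::'a::alg_closed_field. y ^ n)" "n > 0"
  shows "bij (\<lambda>y::'a. y ^ n)"
  using ring_hom_inj[OF assms(1)] nth_root_exists[OF assms(2)] by (metis bijI surjI)

section \<open>Geometric irreducibility\<close>

lemma irreducible_mult_unit:
  fixes u p :: "'a::idom"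
  assumes "u dvd 1" "irreducible p"
  shows "irreducible (u * p)"
proof (rule irreducibleI)
  obtain v where uv: "1 = u * v" using assms(1) by (rule dvdE)
  show "u * p \<noteq> 0" using assms uv by auto
  show "\<not> u * p dvd 1" using assms(2) irreducible_not_unit dvd_mult_right by blast
  fix a b assume "u * p = a * b"
  hence "p = (v * a) * b" using uv by (metis mult.assoc mult.left_commute mult_1)
  hence "v * a dvd 1 \<or> b dvd 1" using irreducibleD[OF assms(2)] by blast
  thus "a dvd 1 \<or> b dvd 1" using dvd_mult_right by blast
qed

lemma mp_eval_dvd_1_nonzero:
  fixes f :: "'a::field mpoly"
  assumes "f dvd 1"
  shows "mp_eval f x \<noteq> 0"
  using ring_hom.hom_dvd_1[OF ring_hom_mp_eval assms, of x] by auto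

lemma vanishing_irreducible_factor:
  fixes f :: "'a::field mpoly"
  assumes "f \<noteq> 0" "mp_eval f x = 0"
  shows "\<exists>g h. f = g * h \<and> irreducible g \<and> mp_eval g x = 0"
  using assms mp_eval_dvd_1_nonzero
  by (intro irreducible_factor_exists) (auto simp: ring_hom.hom_mult[OF ring_hom_mp_eval])

lemma mp_eval_pderiv_mult_nonzero:
  fixes a b :: "'a::comm_ring_1 mpoly"
  assumes "mp_eval (mp_pderiv i (a * b)) x \<noteq> 0" "mp_eval a x = 0"
  shows "mp_eval b x \<noteq> 0"
  using assms by (auto simp: mp_pderiv_mult ring_hom.hom_add[OF ring_hom_mp_eval]
      ring_hom.hom_mult[OF ring_hom_mp_eval])

text \<open>\<open>\<sigma> g\<close> is an irreducible factor of \<open>F\<close> through \<open>x\<close>; it cannot divide \<open>h\<close>, so by primality it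
  divides \<open>g\<close>, hence is an associate of \<open>g\<close>, and comparing the coefficients at \<open>m\<close> makes it equal.\<close>

lemma conjugation_fixes_factor_through_point:
  fixes \<sigma> :: "'a::field \<Rightarrow> 'a"
  assumes inf: "infinite (UNIV :: 'a set)" and \<sigma>: "ring_hom \<sigma>" "bij \<sigma>"
    and fixed: "Poly_Mapping.map \<sigma> F = F" "\<And>i. \<sigma> (x i) = x i"
    and F: "F = g * h" and g: "irreducible g" "mp_eval g x = 0" "Poly_Mapping.lookup g m = 1"
    and h: "mp_eval h x \<noteq> 0"
  shows "Poly_Mapping.map \<sigma> g = g" "Poly_Mapping.map \<sigma> h = h"
proof -
  interpret S: ring_iso "Poly_Mapping.map \<sigma> :: 'a mpoly \<Rightarrow> 'a mpoly" "Poly_Mapping.map (inv \<sigma>)"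
    by (rule ring_iso_map[OF \<sigma>])
  let ?S = "Poly_Mapping.map \<sigma>"
  have Sg: "irreducible (?S g)" using g(1) S.irreducible_iff by blast
  have SF: "F = ?S g * ?S h" using fixed(1) F by (metis ring_hom.hom_mult[OF S.hom])
  have "mp_eval (?S g) x = \<sigma> (mp_eval g x)"
    using ring_hom.mp_eval_map[OF \<sigma>(1), of g x] fixed(2) by simp
  hence Sg_x: "mp_eval (?S g) x = 0" using g(2) by (simp add: ring_hom.hom_0[OF \<sigma>(1)])
  have "?S g dvd g * h" using SF F by (metis dvd_triv_left)
  moreover have "\<not> ?S g dvd h"
    using h Sg_x by (auto elim!: dvdE simp: ring_hom.hom_mult[OF ring_hom_mp_eval])
  ultimately have "?S g dvd g"
    using irreducible_imp_prime_elem_mpoly[OF inf Sg] by (simp add: prime_elem_dvd_mult_iff)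
  then obtain u where u: "g = ?S g * u" by (rule dvdE)
  hence "u dvd 1" using irreducibleD[OF g(1)] irreducible_not_unit[OF Sg] by blast
  hence "vars_below 0 u" by (rule dvd_1_imp_vars_below)
  then obtain c where c: "u = mp_const c" using vars_below_0_iff by blast
  have "Poly_Mapping.lookup g m = c * Poly_Mapping.lookup (?S g) m"
    using u c by (metis lookup_mp_const_mult mult.commute)
  hence "c = 1" using g(3) by (simp add: lookup_map_zero ring_hom.hom_0[OF \<sigma>(1)] ring_hom.hom_1[OF \<sigma>(1)])
  thus Sg_eq: "?S g = g" using u c by (simp add: ring_hom.hom_1[OF ring_hom_mp_const])
  show "?S h = h" using SF F g(1) by (simp add: Sg_eq irreducible_def)
qed

lemma normalised_factor_through_smooth_point:
  fixes F :: "'a::field mpoly"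
  assumes "F \<noteq> 0" "mp_eval F x = 0" "mp_eval (mp_pderiv i F) x \<noteq> 0"
  obtains g h m where "F = g * h" "irreducible g" "mp_eval g x = 0" "Poly_Mapping.lookup g m = 1"
    "mp_eval h x \<noteq> 0"
proof -
  obtain g h where gh: "F = g * h" "irreducible g" "mp_eval g x = 0"
    using vanishing_irreducible_factor[OF assms(1,2)] by blast
  have h: "mp_eval h x \<noteq> 0" using mp_eval_pderiv_mult_nonzero[of i g h x] assms(3) gh(1,3) by simp
  have "g \<noteq> 0" using gh(2) by (simp add: irreducible_def)
  then obtain m where m: "Poly_Mapping.lookup g m \<noteq> 0" using poly_mapping_eqI[of g 0] by auto
  let ?c = "Poly_Mapping.lookup g m"
  have "mp_const (inverse ?c) * mp_const ?c = mp_const (inverse ?c * ?c)"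
    by (rule ring_hom.hom_mult[OF ring_hom_mp_const, symmetric])
  also have "\<dots> = 1" using m by (simp add: ring_hom.hom_1[OF ring_hom_mp_const])
  finally have unit: "mp_const (inverse ?c) * mp_const ?c = 1" .
  have "(mp_const (inverse ?c) * g) * (mp_const ?c * h) = (mp_const (inverse ?c) * mp_const ?c) * (g * h)"
    by (simp only: mult_ac)
  hence "F = (mp_const (inverse ?c) * g) * (mp_const ?c * h)" using gh(1) unit by simp
  moreover have "irreducible (mp_const (inverse ?c) * g)" "mp_eval (mp_const (inverse ?c) * g) x = 0"
      "Poly_Mapping.lookup (mp_const (inverse ?c) * g) m = 1"
    using gh(2,3) m by (simp_all add: irreducible_mult_unit is_unit_mp_const lookup_mp_const_mult
        ring_hom.hom_mult[OF ring_hom_mp_eval])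
  moreover have "mp_eval (mp_const ?c * h) x \<noteq> 0"
    using h m by (simp add: ring_hom.hom_mult[OF ring_hom_mp_eval])
  ultimately show ?thesis by (rule that)
qed

lemma irreducible_map_if_smooth_rational_point:
  fixes F :: "'a::{finite,field} mpoly" and emb :: "'a \<Rightarrow> 'b::alg_closed_field"
  assumes emb: "ring_hom emb" and irr: "irreducible F"
    and P: "mp_eval F P = 0" "mp_eval (mp_pderiv i F) P \<noteq> 0"
  shows "irreducible (Poly_Mapping.map emb F)"
proof -
  interpret emb: ring_hom emb by (rule emb)
  let ?map = "Poly_Mapping.map emb" and ?P = "\<lambda>i. emb (P i)" and ?\<sigma> = "\<lambda>y::'b. y ^ card (UNIV :: 'a set)"
  have inj_map: "inj ?map" by (rule inj_map_zero[OF ring_hom_inj[OF emb] emb.hom_0])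
  have emb_eq_0: "emb x = 0 \<longleftrightarrow> x = 0" for x
    using inj_eq[OF ring_hom_inj[OF emb], of x 0] by (simp add: emb.hom_0)
  have "?map F \<noteq> 0"
    using irr injD[OF inj_map, of F 0] ring_hom.hom_0[OF emb.ring_hom_map] by (auto simp: irreducible_def)
  moreover have "mp_eval (?map F) ?P = 0" "mp_eval (mp_pderiv i (?map F)) ?P \<noteq> 0"
    using P by (simp_all add: emb.mp_eval_map emb.mp_pderiv_map emb_eq_0)
  ultimately obtain g h m where F: "?map F = g * h" and g: "irreducible g" "mp_eval g ?P = 0"
      "Poly_Mapping.lookup g m = 1" and h: "mp_eval h ?P \<noteq> 0"
    by (rule normalised_factor_through_smooth_point)
  have \<sigma>: "ring_hom ?\<sigma>" by (rule ring_hom_frobenius[OF emb])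
  have "Poly_Mapping.map ?\<sigma> (?map F) = ?map F"
    by (simp add: map_map_zero emb.hom_0 frobenius_emb[OF emb] power_0_left)
  moreover have "?\<sigma> (?P j) = ?P j" for j by (rule frobenius_emb[OF emb])
  moreover have "bij ?\<sigma>"
    using card_ge_2_field[where 'a = 'a] by (intro bij_power_alg_closed \<sigma>) simp
  ultimately have "Poly_Mapping.map ?\<sigma> g = g" "Poly_Mapping.map ?\<sigma> h = h"
    using conjugation_fixes_factor_through_point[OF alg_closed_infinite \<sigma>, of "?map F" ?P g h m] F g h
    by blast+
  then obtain g0 h0 where g0: "g = ?map g0" and h0: "h = ?map h0"
    using frobenius_invariant_descends[OF emb] by metis
  have "?map F = ?map (g0 * h0)" using F g0 h0 by (simp add: ring_hom.hom_mult[OF emb.ring_hom_map])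
  hence "F = g0 * h0" by (rule injD[OF inj_map])
  moreover have "\<not> g0 dvd 1"
    using g(1) g0 ring_hom.hom_dvd_1[OF emb.ring_hom_map] irreducible_not_unit by metis
  ultimately have "h dvd 1"
    using irreducibleD[OF irr] h0 ring_hom.hom_dvd_1[OF emb.ring_hom_map] by blast
  thus ?thesis using F g(1) irreducible_mult_unit by (metis mult.commute)
qed

theorem lemma2p6:
  fixes F :: "'a::{finite,field} mpoly"
    and n d :: nat
    and P :: "nat \<Rightarrow> 'a"
  assumes hom: "mp_homogeneous_in n d F"
    and fnc: "frobenius_nonclassical (card (UNIV :: 'a set)) n F"
    and irr: "irreducible F"
    and smooth: "smooth_point n F P"
  shows "\<forall>emb :: 'a \<Rightarrow> 'b::alg_closed_field.
           (emb 0 = 0 \<and> emb 1 = 1 \<and> (\<forall>x y. emb (x + y) = emb x + emb y)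
              \<and> (\<forall>x y. emb (x * y) = emb x * emb y))
           \<longrightarrow> irreducible (Poly_Mapping.map emb F)"
proof (intro allI impI)
  fix emb :: "'a \<Rightarrow> 'b"
  assume "emb 0 = 0 \<and> emb 1 = 1 \<and> (\<forall>x y. emb (x + y) = emb x + emb y) \<and> (\<forall>x y. emb (x * y) = emb x * emb y)"
  hence emb: "ring_hom emb" by (simp add: ring_hom_def)
  obtain i where "mp_eval F P = 0" "mp_eval (mp_pderiv i F) P \<noteq> 0"
    using smooth unfolding smooth_point_def by blast
  thus "irreducible (Poly_Mapping.map emb F)"
    by (rule irreducible_map_if_smooth_rational_point[OF emb irr])
qed

end
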